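(* Assume the law of excluded middle. Let $\alpha\in\mathrm{ord}$ with $\alpha\neq_{\mathrm{Ord}}\underline 0$. Then either there exists $\beta\in\mathrm{ord}$ with $\alpha=_{\mathrm{Ord}}\mathrm{succ}(\beta)$, or $\alpha$ is the supremum (least upper bound for $\le$) of the ordinals $\gamma\in\mathrm{ord}$ with $\gamma<\alpha$.
   Context: Let $\mathfrak F$ be a set of index sets such that: $\mathbb N$ and each $\mathbb N_k=\{n\in\mathbb N:n<k\}$ ($k\ge 0$) belong to $\mathfrak F$; every finitely enumerated subset of an element of $\mathfrak F$ is isomorphic to an element of $\mathfrak F$; for $J\in\mathfrak F$ the set of finitely enumerated subsets of $J$ is isomorphic to an element of $\mathfrak F$; $\mathfrak F$ is stable under disjoint unions indexed by elements of $\mathfrak F$. A finitely enumerated subset of $A$ is one given by a map $\mathbb N_k\to A$; write $F\subseteq_f I$. The set $\mathrm{ord}$ is inductively generated by $\underline 0$ and, for every family $(\alpha_i)_{i\in I}$ with $I\in\mathfrak F$, $\alpha_i\in\mathrm{ord}$, an element $\mathrm S(\alpha_i)_{i\in I}$; for such $\alpha$, $I_\alpha=I$ and $\alpha_i$ are its definitional subordinals; $I_{\underline 0}=\emptyset$. $\mathrm{succ}(\beta)$ is $\mathrm S$ of the one-element family $(\beta)$. For a finite list $F$ in $I_\alpha$, $\alpha_F$ is the list of the $\alpha_i$, $i\in F$. Relations between an element and a nonempty finite list, by simultaneous induction: $\alpha\le\beta^1,\dots,\beta^m$ means $\alpha_i<\beta^1,\dots,\beta^m$ for all $i\in I_\alpha$;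 $\alpha<\beta^1,\dots,\beta^m$ means there exist $F_1\subseteq_f I_{\beta^1},\dots,F_m\subseteq_f I_{\beta^m}$, not all empty, with $\alpha\le\beta^1_{F_1},\dots,\beta^m_{F_m}$ (concatenated list). $\alpha=_{\mathrm{Ord}}\beta$ means $\alpha\le\beta$ and $\beta\le\alpha$. *)

theory Defs
  imports Main "HOL-Library.Equipollence"
begin

text \<open>Tree ordinals over index sets drawn from a family FF of subsets of a
 universe type 'i.  S I f is the ordinal S (f i) for i in I; values of f
 outside I are irrelevant (never inspected by the relations below).\<close>

datatype 'i ordt = Zero | S "'i set" "'i \<Rightarrow> 'i ordt"

fun idx :: "'i ordt \<Rightarrow> 'i set" where
  "idx Zero = {}"
| "idx (S I f) = I"

fun sub :: "'i ordt \<Rightarrow> 'i \<Rightarrow> 'i ordt" where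
  "sub Zero i = Zero"
| "sub (S I f) i = f i"

text \<open>Closure conditions on the family of index sets (up to isomorphism =
 equipollence, since index sets live in a fixed universe type).\<close>

definition index_family :: "'i set set \<Rightarrow> bool" where
  "index_family FF \<longleftrightarrow>
     (\<exists>I\<in>FF. I \<approx> (UNIV :: nat set))
   \<and> (\<forall>k::nat. \<exists>I\<in>FF. I \<approx> {..<k})
   \<and> (\<forall>J\<in>FF. \<forall>k::nat. \<forall>e. e ` {..<k} \<subseteq> J \<longrightarrow> (\<exists>I\<in>FF. I \<approx> e ` {..<k}))
   \<and> (\<forall>J\<in>FF. \<exists>I\<in>FF. I \<approx> {xs :: 'i list. set xs \<subseteq> J})
   \<and> (\<forall>I\<in>FF. \<forall>A. (\<forall>i\<in>I. A i \<in> FF) \<longrightarrow> (\<exists>K\<in>FF. K \<approx> Sigma I A))"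

inductive in_ord :: "'i set set \<Rightarrow> 'i ordt \<Rightarrow> bool" for FF where
  zero: "in_ord FF Zero"
| succ: "I \<in> FF \<Longrightarrow> (\<forall>i\<in>I. in_ord FF (f i)) \<Longrightarrow> in_ord FF (S I f)"

text \<open>alpha \<le> beta^1..beta^m and alpha < beta^1..beta^m (nonempty list on the
 right), by simultaneous induction.  Fs!j is the finitely enumerated subset F_j
 of I_{beta^j}, given as a list.\<close>

inductive ord_le :: "'i ordt \<Rightarrow> 'i ordt list \<Rightarrow> bool"
      and ord_lt :: "'i ordt \<Rightarrow> 'i ordt list \<Rightarrow> bool" where
  le: "bs \<noteq> [] \<Longrightarrow> (\<forall>i\<in>idx a. ord_lt (sub a i) bs) \<Longrightarrow> ord_le a bs"
| lt: "bs \<noteq> [] \<Longrightarrow> length Fs = length bs \<Longrightarrow>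
       (\<forall>j<length bs. set (Fs ! j) \<subseteq> idx (bs ! j)) \<Longrightarrow>
       (\<exists>j<length bs. Fs ! j \<noteq> []) \<Longrightarrow>
       ord_le a (concat (map2 (\<lambda>F b. map (sub b) F) Fs bs)) \<Longrightarrow> ord_lt a bs"

definition ord_eq :: "'i ordt \<Rightarrow> 'i ordt \<Rightarrow> bool" where
  "ord_eq a b \<longleftrightarrow> ord_le a [b] \<and> ord_le b [a]"

definition succ_ord :: "'i set set \<Rightarrow> 'i ordt \<Rightarrow> 'i ordt" where
  "succ_ord FF b = S (SOME I. I \<in> FF \<and> I \<approx> {..<Suc 0}) (\<lambda>_. b)"

end

theory Submission
  imports Defs
begin

text \<open>The list relations reduce to binary ones: \<open>\<alpha> \<le> \<beta>\<close> iff every \<open>\<alpha>\<^sub>i < \<beta>\<close>, and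
  \<open>\<alpha> < \<beta>\<close> iff \<open>\<alpha> \<le> \<beta>\<^sub>k\<close> for some \<open>k\<close>; a relation against a list holds iff it holds
  against one of its entries. Classically these binary relations form a total preorder.
  Hence either \<open>\<alpha> \<le> succ(\<alpha>\<^sub>i)\<close> for some \<open>i\<close>, and then \<open>\<alpha> = succ(\<alpha>\<^sub>i)\<close> because
  \<open>\<alpha>\<^sub>i < \<alpha>\<close>; or \<open>succ(\<alpha>\<^sub>i) < \<alpha>\<close> for all \<open>i\<close>, and then every upper bound \<open>\<delta>\<close> of the
  ordinals below \<open>\<alpha>\<close> satisfies \<open>succ(\<alpha>\<^sub>i) \<le> \<delta>\<close>, i.e. \<open>\<alpha>\<^sub>i < \<delta>\<close>, so \<open>\<alpha> \<le> \<delta>\<close>.\<close>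

inductive le_ord :: "'i ordt \<Rightarrow> 'i ordt \<Rightarrow> bool"
      and lt_ord :: "'i ordt \<Rightarrow> 'i ordt \<Rightarrow> bool" where
  le_ordI: "(\<And>i. i \<in> idx a \<Longrightarrow> lt_ord (sub a i) b) \<Longrightarrow> le_ord a b"
| lt_ordI: "k \<in> idx b \<Longrightarrow> le_ord a (sub b k) \<Longrightarrow> lt_ord a b"

lemma le_ordD: "le_ord a b \<Longrightarrow> i \<in> idx a \<Longrightarrow> lt_ord (sub a i) b"
  by (auto elim: le_ord.cases)

lemma lt_ordE:
  assumes "lt_ord a b"
  obtains k where "k \<in> idx b" "le_ord a (sub b k)"
  using assms by (auto elim: lt_ord.cases)

lemma ordt_sub_induct:
  assumes "\<And>a. (\<And>i. i \<in> idx a \<Longrightarrow> P (sub a i)) \<Longrightarrow> P a"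
  shows "P a"
proof (induction a)
  case Zero
  then show ?case using assms[of Zero] by simp
next
  case (S I f)
  then show ?case using assms[of "S I f"] by simp
qed

lemma le_ord_refl: "le_ord a a"
proof (induction a rule: ordt_sub_induct)
  case (1 a)
  then show ?case by (blast intro: le_ordI lt_ordI)
qed

lemma lt_ord_sub: "k \<in> idx a \<Longrightarrow> lt_ord (sub a k) a"
  by (rule lt_ordI[OF _ le_ord_refl])

lemma le_ord_lt_ord_trans_all:
  "(le_ord a b \<longrightarrow> le_ord b c \<longrightarrow> le_ord a c)
   \<and> (le_ord a b \<longrightarrow> lt_ord b c \<longrightarrow> lt_ord a c)
   \<and> (lt_ord a b \<longrightarrow> le_ord b c \<longrightarrow> lt_ord a c)"
proof (induction a arbitrary: b c rule: ordt_sub_induct)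
  case (1 a)
  have le_le: "le_ord a c" if "le_ord a b" "le_ord b c" for b c
  proof (rule le_ordI)
    fix i assume "i \<in> idx a"
    then show "lt_ord (sub a i) c"
      using 1 le_ordD[OF \<open>le_ord a b\<close>] \<open>le_ord b c\<close> by blast
  qed
  have le_lt: "lt_ord a c" if "le_ord a b" "lt_ord b c" for b c
    using \<open>lt_ord b c\<close> by (rule lt_ordE) (blast intro: lt_ordI le_le[OF \<open>le_ord a b\<close>])
  have lt_le: "lt_ord a c" if "lt_ord a b" "le_ord b c" for b c
    using \<open>lt_ord a b\<close> by (rule lt_ordE) (blast intro: le_lt dest: le_ordD[OF \<open>le_ord b c\<close>])
  show ?case using le_le le_lt lt_le by blast
qed

lemma le_ord_trans: "le_ord a b \<Longrightarrow> le_ord b c \<Longrightarrow> le_ord a c"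
  and le_lt_ord_trans: "le_ord a b \<Longrightarrow> lt_ord b c \<Longrightarrow> lt_ord a c"
  and lt_le_ord_trans: "lt_ord a b \<Longrightarrow> le_ord b c \<Longrightarrow> lt_ord a c"
  using le_ord_lt_ord_trans_all by blast+

lemma lt_ord_imp_le_ord: "lt_ord a b \<Longrightarrow> le_ord a b"
proof (induction a arbitrary: b rule: ordt_sub_induct)
  case (1 a)
  obtain k where k: "k \<in> idx b" "le_ord a (sub b k)"
    using \<open>lt_ord a b\<close> by (rule lt_ordE)
  show ?case
  proof (rule le_ordI)
    fix i assume "i \<in> idx a"
    then have "le_ord (sub a i) (sub b k)"
      using 1 le_ordD[OF k(2)] by blast
    then show "lt_ord (sub a i) b"
      using le_lt_ord_trans lt_ord_sub[OF k(1)] by blast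
  qed
qed

lemma le_ord_or_lt_ord: "le_ord a b \<or> lt_ord b a"
proof (induction a arbitrary: b rule: ordt_sub_induct)
  case (1 a)
  show ?case
  proof (rule ccontr)
    assume "\<not> (le_ord a b \<or> lt_ord b a)"
    then obtain i where i: "i \<in> idx a" "\<not> lt_ord (sub a i) b" and "\<not> lt_ord b a"
      by (blast intro: le_ordI)
    have "le_ord b (sub a i)"
    proof (rule le_ordI)
      fix j assume "j \<in> idx b"
      then have "\<not> le_ord (sub a i) (sub b j)"
        using i(2) by (blast intro: lt_ordI)
      then show "lt_ord (sub b j) (sub a i)" using 1[OF i(1)] by blast
    qed
    then show False
      using i(1) \<open>\<not> lt_ord b a\<close> by (blast intro: lt_ordI)
  qed
qed

lemma le_ord_greatest_in_list:
  "bs \<noteq> [] \<Longrightarrow> \<exists>m\<in>set bs. \<forall>b\<in>set bs. le_ord b m"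
proof (induction bs)
  case Nil
  then show ?case by simp
next
  case (Cons x bs)
  show ?case
  proof (cases "bs = []")
    case True
    then show ?thesis using le_ord_refl[of x] by simp
  next
    case False
    then obtain m where m: "m \<in> set bs" "\<forall>b\<in>set bs. le_ord b m"
      using Cons.IH by blast
    show ?thesis
    proof (cases "le_ord x m")
      case True
      then show ?thesis using m by auto
    next
      case False
      then have "le_ord m x"
        using le_ord_or_lt_ord[of x m] lt_ord_imp_le_ord[of m x] by simp
      then have "\<forall>b\<in>set (x # bs). le_ord b x"
        using m(2) le_ord_refl[of x] by (auto intro: le_ord_trans[OF _ \<open>le_ord m x\<close>])
      then show ?thesis by simp
    qed
  qed
qed

lemma ord_le_imp_ex_le_ord:
  shows "ord_le a bs \<Longrightarrow> \<exists>b\<in>set bs. le_ord a b"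
    and "ord_lt a bs \<Longrightarrow> \<exists>b\<in>set bs. lt_ord a b"
proof (induction rule: ord_le_ord_lt.inducts)
  case (le bs a)
  then obtain m where m: "m \<in> set bs" "\<forall>b\<in>set bs. le_ord b m"
    using le_ord_greatest_in_list by blast
  have "le_ord a m"
  proof (rule le_ordI)
    fix i assume "i \<in> idx a"
    then obtain b where "b \<in> set bs" "lt_ord (sub a i) b"
      using le.IH by blast
    then show "lt_ord (sub a i) m"
      using m(2) lt_le_ord_trans by blast
  qed
  then show ?case using m(1) by blast
next
  case (lt bs Fs a)
  then obtain y where y: "y \<in> set (concat (map2 (\<lambda>F b. map (sub b) F) Fs bs))" "le_ord a y"
    by blast
  then obtain j i where "j < length bs" "i \<in> set (Fs ! j)" "y = sub (bs ! j) i"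
    by (auto simp: set_zip)
  then have "lt_ord a (bs ! j)"
    using lt.hyps(3) y(2) by (blast intro: lt_ordI)
  then show ?case using \<open>j < length bs\<close> by auto
qed

lemma le_ord_imp_ord_le:
  "(le_ord a b \<longrightarrow> ord_le a [b]) \<and> (lt_ord a b \<longrightarrow> ord_lt a [b])"
proof (induction a arbitrary: b rule: ordt_sub_induct)
  case (1 a)
  have le: "ord_le a [b]" if "le_ord a b" for b
    using that 1 by (auto dest: le_ordD intro!: ord_le_ord_lt.le)
  have "ord_lt a [b]" if "lt_ord a b" for b
  proof -
    obtain k where "k \<in> idx b" "ord_le a [sub b k]"
      using \<open>lt_ord a b\<close> le by (auto elim: lt_ordE)
    then show ?thesis by (auto intro!: ord_le_ord_lt.lt[where Fs = "[[k]]"])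
  qed
  with le show ?case by blast
qed

lemma ord_le_singleton_iff: "ord_le a [b] \<longleftrightarrow> le_ord a b"
  using ord_le_imp_ex_le_ord(1)[of a "[b]"] le_ord_imp_ord_le by auto

lemma ord_lt_singleton_iff: "ord_lt a [b] \<longleftrightarrow> lt_ord a b"
  using ord_le_imp_ex_le_ord(2)[of a "[b]"] le_ord_imp_ord_le by auto

lemma sub_succ_ord [simp]: "sub (succ_ord FF b) i = b"
  by (simp add: succ_ord_def)

lemma idx_succ_ord:
  assumes "index_family FF"
  shows "idx (succ_ord FF b) \<in> FF" and "idx (succ_ord FF b) \<noteq> {}"
proof -
  have "\<exists>I. I \<in> FF \<and> I \<approx> {..<Suc 0}"
    using assms by (auto simp: index_family_def)
  then have I: "idx (succ_ord FF b) \<in> FF \<and> idx (succ_ord FF b) \<approx> {..<Suc 0}"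
    unfolding succ_ord_def idx.simps by (rule someI_ex)
  then show "idx (succ_ord FF b) \<in> FF" by blast
  show "idx (succ_ord FF b) \<noteq> {}"
  proof
    assume "idx (succ_ord FF b) = {}"
    then have "{..<Suc 0} \<approx> ({} :: 'i set)"
      using I eqpoll_sym[of "idx (succ_ord FF b)" "{..<Suc 0}"] by simp
    then have "{..<Suc 0} = ({} :: nat set)" by simp
    then show False by blast
  qed
qed

lemma le_ord_succ_ord_iff:
  assumes "index_family FF"
  shows "le_ord (succ_ord FF b) c \<longleftrightarrow> lt_ord b c"
proof
  assume "le_ord (succ_ord FF b) c"
  moreover obtain i where "i \<in> idx (succ_ord FF b)"
    using idx_succ_ord(2)[OF assms] by blast
  ultimately show "lt_ord b c"
    using le_ordD by fastforce
qed (auto intro: le_ordI)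

lemma in_ord_succ_ord: "index_family FF \<Longrightarrow> in_ord FF b \<Longrightarrow> in_ord FF (succ_ord FF b)"
  using idx_succ_ord(1) by (auto simp: succ_ord_def intro: in_ord.intros)

lemma in_ord_sub: "in_ord FF a \<Longrightarrow> i \<in> idx a \<Longrightarrow> in_ord FF (sub a i)"
  by (auto elim: in_ord.cases)

lemma succ_ord_sub_or_limit:
  assumes "index_family FF"
  obtains i where "i \<in> idx a" "le_ord a (succ_ord FF (sub a i))" "le_ord (succ_ord FF (sub a i)) a"
  | "\<forall>i\<in>idx a. lt_ord (succ_ord FF (sub a i)) a"
proof (cases "\<exists>i\<in>idx a. le_ord a (succ_ord FF (sub a i))")
  case True
  then obtain i where i: "i \<in> idx a" "le_ord a (succ_ord FF (sub a i))"
    by blast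
  moreover have "le_ord (succ_ord FF (sub a i)) a"
    using lt_ord_sub[OF i(1)] by (simp add: le_ord_succ_ord_iff[OF assms])
  ultimately show thesis by (rule that(1))
next
  case False
  then have "\<forall>i\<in>idx a. lt_ord (succ_ord FF (sub a i)) a"
    using le_ord_or_lt_ord by blast
  then show thesis by (rule that(2))
qed

lemma limit_le_ord_upper_bound:
  assumes FF: "index_family FF" and a: "in_ord FF a"
    and limit: "\<forall>i\<in>idx a. lt_ord (succ_ord FF (sub a i)) a"
    and bound: "\<forall>g. in_ord FF g \<and> lt_ord g a \<longrightarrow> le_ord g d"
  shows "le_ord a d"
proof -
  have "lt_ord (sub a i) d" if "i \<in> idx a" for i
  proof -
    have "le_ord (succ_ord FF (sub a i)) d"
      using bound limit that in_ord_succ_ord[OF FF in_ord_sub[OF a]] by blast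
    then show ?thesis using le_ord_succ_ord_iff[OF FF] by blast
  qed
  then show ?thesis by (rule le_ordI)
qed

theorem corollary3p20:
  fixes FF :: "'i set set" and \<alpha> :: "'i ordt"
  assumes "index_family FF"
    and "in_ord FF \<alpha>"
    and "\<not> ord_eq \<alpha> Zero"
  shows "(\<exists>\<beta>. in_ord FF \<beta> \<and> ord_eq \<alpha> (succ_ord FF \<beta>))
       \<or> ((\<forall>\<gamma>. in_ord FF \<gamma> \<and> ord_lt \<gamma> [\<alpha>] \<longrightarrow> ord_le \<gamma> [\<alpha>])
          \<and> (\<forall>\<delta>. in_ord FF \<delta> \<longrightarrow>
                (\<forall>\<gamma>. in_ord FF \<gamma> \<and> ord_lt \<gamma> [\<alpha>] \<longrightarrow> ord_le \<gamma> [\<delta>])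
                \<longrightarrow> ord_le \<alpha> [\<delta>]))"
proof (cases rule: succ_ord_sub_or_limit[OF assms(1), of \<alpha>])
  case (1 i)
  then have "in_ord FF (sub \<alpha> i) \<and> ord_eq \<alpha> (succ_ord FF (sub \<alpha> i))"
    using in_ord_sub[OF assms(2)] by (simp add: ord_eq_def ord_le_singleton_iff)
  then show ?thesis by blast
next
  case 2
  then have "\<forall>\<delta>. (\<forall>\<gamma>. in_ord FF \<gamma> \<and> lt_ord \<gamma> \<alpha> \<longrightarrow> le_ord \<gamma> \<delta>) \<longrightarrow> le_ord \<alpha> \<delta>"
    using limit_le_ord_upper_bound[OF assms(1,2)] by blast
  then show ?thesis
    using lt_ord_imp_le_ord unfolding ord_le_singleton_iff ord_lt_singleton_iff by blast
qed

end
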